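(* Let $R$ be an exchange ring and $\alpha=[a_1\ a_2\ \cdots\ a_n]$ a right unimodular row over $R$ (i.e. $a_1R+\cdots+a_nR=R$), with $n\ge 2$. Then $\alpha$ can be transformed by a finite sequence of elementary column operations to a row $[b_1\ b_2\ \cdots\ b_n]$ such that $Rb_1R=R$ and $b_i\in a_iRa_i$ for all $i\ge 2$.
   Context: All rings are unital. A ring $R$ is an exchange ring if for every $a\in R$ there is an idempotent $e\in aR$ with $1-e\in(1-a)R$ (equivalently, $R_R$ has the finite exchange property). An elementary column operation on a row $[c_1\ \cdots\ c_n]$ replaces some entry $c_i$ by $c_i+c_jr$ for some $j\neq i$ and $r\in R$. *)

theory Defs
  imports Main
begin

definition exchange_ring :: "'a::ring_1 itself \<Rightarrow> bool" where
  "exchange_ring _ \<longleftrightarrow>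
     (\<forall>a::'a. \<exists>e. e * e = e \<and> (\<exists>r. e = a * r) \<and> (\<exists>s. 1 - e = (1 - a) * s))"

definition right_unimodular :: "'a::ring_1 list \<Rightarrow> bool" where
  "right_unimodular as \<longleftrightarrow>
     (\<exists>rs. length rs = length as \<and> sum_list (map (\<lambda>(a, r). a * r) (zip as rs)) = 1)"

definition elem_col_op :: "'a::ring_1 list \<Rightarrow> 'a list \<Rightarrow> bool" where
  "elem_col_op cs ds \<longleftrightarrow>
     (\<exists>i j r. i < length cs \<and> j < length cs \<and> i \<noteq> j \<and> ds = cs[i := cs ! i + cs ! j * r])"

text \<open>The two-sided ideal RbR equals R, i.e. 1 is a finite sum of terms x b y.\<close>
definition full_two_sided :: "'a::ring_1 \<Rightarrow> bool" where
  "full_two_sided b \<longleftrightarrow>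
     (\<exists>xs ys. length xs = length ys \<and> sum_list (map (\<lambda>(x, y). x * b * y) (zip xs ys)) = 1)"

end

theory Submission
  imports Defs
begin

text \<open>
  Since the row stays unimodular under column operations, the exchange property yields, for any
  column c, an idempotent e \<in> cR with 1 - e in the right ideal of the other columns. Subtracting
  (1 - e)c from c turns it into ec \<in> cRc; this is done in turn for columns 2, ..., n. For the
  first column a, with e \<in> aR and f = 1 - e, adding f(1 - a)f gives b with ebx = e (where e = ax)
  and fbf = f, hence 1 = ebx + fbf \<in> RbR.
\<close>

lemma right_unimodular_iff:
  "right_unimodular cs \<longleftrightarrow> (\<exists>r. (\<Sum>j<length cs. cs ! j * r j) = 1)"
proof
  assume "right_unimodular cs"
  then obtain rs where "length rs = length cs" "sum_list (map (\<lambda>(a, r). a * r) (zip cs rs)) = 1"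
    unfolding right_unimodular_def by blast
  then have "(\<Sum>j<length cs. cs ! j * rs ! j) = 1"
    by (simp add: sum_list_sum_nth atLeast0LessThan)
  then show "\<exists>r. (\<Sum>j<length cs. cs ! j * r j) = 1" by blast
next
  assume "\<exists>r. (\<Sum>j<length cs. cs ! j * r j) = 1"
  then obtain r where "(\<Sum>j<length cs. cs ! j * r j) = 1" by blast
  then have "sum_list (map (\<lambda>(a, r). a * r) (zip cs (map r [0..<length cs]))) = 1"
    by (simp add: sum_list_sum_nth atLeast0LessThan)
  then show "right_unimodular cs"
    unfolding right_unimodular_def by (metis length_map length_upt minus_nat.diff_0)
qed

lemma length_elem_col_op: "elem_col_op cs ds \<Longrightarrow> length ds = length cs"
  unfolding elem_col_op_def by auto

lemma length_elem_col_ops: "elem_col_op\<^sup>*\<^sup>* cs ds \<Longrightarrow> length ds = length cs"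
  by (induction rule: rtranclp_induct) (auto dest: length_elem_col_op)

lemma right_unimodular_elem_col_op:
  assumes "elem_col_op cs ds" "right_unimodular cs"
  shows "right_unimodular ds"
proof -
  obtain i j t where ij: "i < length cs" "j < length cs" "i \<noteq> j"
    and ds: "ds = cs[i := cs ! i + cs ! j * t]"
    using assms(1) unfolding elem_col_op_def by blast
  obtain r where r: "(\<Sum>k<length cs. cs ! k * r k) = 1"
    using assms(2) unfolding right_unimodular_iff by blast
  define r' where "r' = r(j := r j - t * r i)"
  define d where "d k = (if k = i then cs ! j * t * r i else 0) - (if k = j then cs ! j * t * r i else 0)"
    for k
  have "ds ! k * r' k = cs ! k * r k + d k" if "k < length cs" for k
    using ij that by (auto simp: ds r'_def d_def algebra_simps)
  then have "(\<Sum>k<length ds. ds ! k * r' k) = (\<Sum>k<length cs. cs ! k * r k + d k)"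
    using ds by (auto intro: sum.cong)
  also have "\<dots> = 1"
    using ij r by (simp add: d_def sum.distrib sum_subtractf)
  finally show ?thesis unfolding right_unimodular_iff by blast
qed

lemma right_unimodular_elem_col_ops:
  "elem_col_op\<^sup>*\<^sup>* cs ds \<Longrightarrow> right_unimodular cs \<Longrightarrow> right_unimodular ds"
  by (induction rule: rtranclp_induct) (auto intro: right_unimodular_elem_col_op)

lemma elem_col_ops_add_columns:
  assumes "i < length cs" "J \<subseteq> {..<length cs} - {i}"
  shows "elem_col_op\<^sup>*\<^sup>* cs (cs[i := cs ! i + (\<Sum>j\<in>J. cs ! j * y j)])"
proof -
  have "finite J"
    using assms(2) finite_subset by blast
  then show ?thesis
    using assms(2)
  proof (induction J rule: finite_induct)
    case empty
    show ?case by simp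
  next
    case (insert j J)
    define cs' where "cs' = cs[i := cs ! i + (\<Sum>j\<in>J. cs ! j * y j)]"
    have "elem_col_op\<^sup>*\<^sup>* cs cs'"
      using insert unfolding cs'_def by simp
    moreover have "elem_col_op cs' (cs'[i := cs' ! i + cs' ! j * y j])"
      unfolding elem_col_op_def using insert.prems assms(1)
      by (intro exI[of _ i] exI[of _ j] exI[of _ "y j"]) (auto simp: cs'_def)
    moreover have "cs'[i := cs' ! i + cs' ! j * y j] = cs[i := cs ! i + (\<Sum>j\<in>insert j J. cs ! j * y j)]"
      using insert assms(1) by (auto simp: cs'_def algebra_simps)
    ultimately show ?case by (metis rtranclp.rtrancl_into_rtrancl)
  qed
qed

lemma exchange_ring_comaximal_idempotent:
  fixes a :: "'a::ring_1"
  assumes "exchange_ring TYPE('a)" "a * r + c = 1"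
  shows "\<exists>e x y. e * e = e \<and> e = a * x \<and> 1 - e = c * y"
proof -
  obtain e s t where "e * e = e" "e = (a * r) * s" "1 - e = (1 - a * r) * t"
    using assms(1) unfolding exchange_ring_def by blast
  moreover have "1 - a * r = c"
    using assms(2) by (simp add: algebra_simps)
  ultimately show ?thesis by (metis mult.assoc)
qed

lemma exchange_ring_unimodular_idempotent:
  fixes cs :: "'a::ring_1 list"
  assumes "exchange_ring TYPE('a)" "right_unimodular cs" "i < length cs"
  shows "\<exists>e x y. e * e = e \<and> e = cs ! i * x \<and> 1 - e = (\<Sum>j\<in>{..<length cs} - {i}. cs ! j * y j)"
proof -
  obtain r where "(\<Sum>k<length cs. cs ! k * r k) = 1"
    using assms(2) unfolding right_unimodular_iff by blast
  then have "cs ! i * r i + (\<Sum>j\<in>{..<length cs} - {i}. cs ! j * r j) = 1"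
    using assms(3) by (simp add: sum.remove)
  from exchange_ring_comaximal_idempotent[OF assms(1) this] obtain e x y
    where "e * e = e" "e = cs ! i * x" "1 - e = (\<Sum>j\<in>{..<length cs} - {i}. cs ! j * r j) * y"
    by blast
  then show ?thesis
    by (intro exI[of _ e] exI[of _ x] exI[of _ "\<lambda>j. r j * y"])
      (simp add: sum_distrib_right mult.assoc)
qed

lemma elem_col_ops_to_corner:
  fixes cs :: "'a::ring_1 list"
  assumes "exchange_ring TYPE('a)" "right_unimodular cs" "k < length cs"
  shows "\<exists>x. elem_col_op\<^sup>*\<^sup>* cs (cs[k := cs ! k * x * cs ! k])"
proof -
  obtain e x y where e: "e * e = e" "e = cs ! k * x"
    and f: "1 - e = (\<Sum>j\<in>{..<length cs} - {k}. cs ! j * y j)"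
    using exchange_ring_unimodular_idempotent[OF assms] by blast
  have "(\<Sum>j\<in>{..<length cs} - {k}. cs ! j * - (y j * cs ! k)) = - ((1 - e) * cs ! k)"
    unfolding f by (simp add: sum_distrib_right mult.assoc sum_negf)
  then have "cs ! k + (\<Sum>j\<in>{..<length cs} - {k}. cs ! j * - (y j * cs ! k)) = cs ! k * x * cs ! k"
    using e(2) by (simp add: algebra_simps)
  then show ?thesis
    using elem_col_ops_add_columns[OF assms(3) order_refl, of "\<lambda>j. - (y j * cs ! k)"] by metis
qed

lemma full_two_sided_idempotent_perturb:
  fixes a :: "'a::ring_1"
  assumes e: "e * e = e" "e = a * x"
  shows "full_two_sided (a + (1 - e) * (1 - a) * (1 - e))"
proof -
  define f where "f = 1 - e"
  define b where "b = a + f * (1 - a) * f"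
  have ef: "e * f = 0" "f * e = 0" "f * f = f"
    using e(1) by (simp_all add: f_def algebra_simps)
  have "e * b * x = e * (a * x) + (e * f) * (1 - a) * f * x"
    by (simp add: b_def algebra_simps)
  then have ebx: "e * b * x = e"
    using ef e by simp
  have "f * b * f = f * a * f + (f * f) * (1 - a) * (f * f)"
    by (simp add: b_def algebra_simps)
  then have fbf: "f * b * f = f"
    using ef by (simp add: algebra_simps)
  have "sum_list (map (\<lambda>(x, y). x * b * y) (zip [e, f] [x, f])) = 1"
    using ebx fbf by (simp add: f_def)
  then show ?thesis
    unfolding full_two_sided_def b_def f_def by (metis length_Cons)
qed

lemma elem_col_ops_to_full_two_sided:
  fixes cs :: "'a::ring_1 list"
  assumes "exchange_ring TYPE('a)" "right_unimodular cs" "0 < length cs"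
  shows "\<exists>b. full_two_sided b \<and> elem_col_op\<^sup>*\<^sup>* cs (cs[0 := b])"
proof -
  obtain e x y where e: "e * e = e" "e = cs ! 0 * x"
    and f: "1 - e = (\<Sum>j\<in>{..<length cs} - {0}. cs ! j * y j)"
    using exchange_ring_unimodular_idempotent[OF assms] by blast
  define g where "g = (1 - cs ! 0) * (1 - e)"
  have "(\<Sum>j\<in>{..<length cs} - {0}. cs ! j * (y j * g)) = (1 - e) * g"
    unfolding f by (simp add: sum_distrib_right mult.assoc)
  then have "elem_col_op\<^sup>*\<^sup>* cs (cs[0 := cs ! 0 + (1 - e) * (1 - cs ! 0) * (1 - e)])"
    using elem_col_ops_add_columns[OF assms(3) order_refl, of "\<lambda>j. y j * g"]
    by (simp add: g_def mult.assoc)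
  then show ?thesis
    using full_two_sided_idempotent_perturb[OF e] by blast
qed

lemma elem_col_ops_to_corners:
  fixes as :: "'a::ring_1 list"
  assumes "exchange_ring TYPE('a)" "right_unimodular as"
  shows "k \<le> length as \<Longrightarrow> \<exists>cs. elem_col_op\<^sup>*\<^sup>* as cs \<and>
    (\<forall>i. 1 \<le> i \<and> i < k \<longrightarrow> (\<exists>r. cs ! i = as ! i * r * as ! i)) \<and>
    (\<forall>i. k \<le> i \<and> i < length as \<longrightarrow> cs ! i = as ! i)"
proof (induction k)
  case 0
  show ?case by auto
next
  case (Suc k)
  then obtain cs where cs: "elem_col_op\<^sup>*\<^sup>* as cs"
    "\<forall>i. 1 \<le> i \<and> i < k \<longrightarrow> (\<exists>r. cs ! i = as ! i * r * as ! i)"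
    "\<forall>i. k \<le> i \<and> i < length as \<longrightarrow> cs ! i = as ! i"
    by auto
  have k: "k < length cs"
    using Suc.prems length_elem_col_ops[OF cs(1)] by simp
  obtain x where x: "elem_col_op\<^sup>*\<^sup>* cs (cs[k := cs ! k * x * cs ! k])"
    using elem_col_ops_to_corner[OF assms(1) right_unimodular_elem_col_ops[OF cs(1) assms(2)] k]
    by blast
  have "cs ! k = as ! k"
    using cs(3) k length_elem_col_ops[OF cs(1)] by simp
  then show ?case
    using cs x k by (intro exI[of _ "cs[k := cs ! k * x * cs ! k]"]) (auto simp: less_Suc_eq)
qed

theorem corollary2p5:
  fixes as :: "'a::ring_1 list"
  assumes "exchange_ring TYPE('a)"
    and "length as \<ge> 2"
    and "right_unimodular as"
  shows "\<exists>bs. elem_col_op\<^sup>*\<^sup>* as bs \<and> full_two_sided (bs ! 0) \<and>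
           (\<forall>i. 1 \<le> i \<and> i < length as \<longrightarrow> (\<exists>r. bs ! i = as ! i * r * as ! i))"
proof -
  obtain cs where cs: "elem_col_op\<^sup>*\<^sup>* as cs"
    "\<forall>i. 1 \<le> i \<and> i < length as \<longrightarrow> (\<exists>r. cs ! i = as ! i * r * as ! i)"
    using elem_col_ops_to_corners[OF assms(1,3) order_refl] by auto
  have len: "length cs = length as"
    using length_elem_col_ops[OF cs(1)] .
  then have "0 < length cs"
    using assms(2) by linarith
  then obtain b where b: "full_two_sided b" "elem_col_op\<^sup>*\<^sup>* cs (cs[0 := b])"
    using elem_col_ops_to_full_two_sided[OF assms(1) right_unimodular_elem_col_ops[OF cs(1) assms(3)]]
    by blast
  show ?thesis
    using cs b len \<open>0 < length cs\<close> by (intro exI[of _ "cs[0 := b]"]) auto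
qed

end
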